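(* Let $M$ and $M'$ be two stable matchings in an instance $I$ of SPA-S, and let $M^\lor$ be the assignment defined from $M,M'$ in the context. If a project $p_j$ is undersubscribed in $M^\lor$, then $p_j$ is undersubscribed in at least one of $M$ and $M'$.
   Context: An instance $I$ of SPA-S consists of a finite set $\mathcal{S}$ of students, a finite set $\mathcal{P}$ of projects and a finite set $\mathcal{L}$ of lecturers. Each student $s_i$ ranks a subset $A_i\subseteq\mathcal{P}$ (its acceptable projects) in strict order. Each project is offered by exactly one lecturer; lecturer $l_k$ offers a nonempty set $P_k\subseteq\mathcal{P}$, the $P_k$ partitioning $\mathcal{P}$. Each lecturer $l_k$ ranks in strict order the students who find at least one project of $P_k$ acceptable. Projects have capacities $c_j\in\mathbb{Z}^+$, lecturers have capacities $d_k\in\mathbb{Z}^+$ with $\max\{c_j:p_j\in P_k\}\le d_k\le\sum\{c_j:p_j\in P_k\}$. A pair $(s_i,p_j)$, $p_j$ offered by $l_k$, is acceptable if $p_j\in A_i$ and $s_i$ is on $l_k$'s list. A matching $M$ is a set of acceptable pairs with each student in at most one pair, $|M(p_j)|\le c_j$, $|M(l_k)|\le d_k$, where for an assignment $M$ (a set of acceptable pairs), $M(s_i)$, $M(p_j)$, $M(l_k)$ denote the project of $s_i$, the students assigned to $p_j$, and the students assigned to projects of $l_k$. Undersubscribed/full means fewer than/exactly capacity many assigned students. An acceptable pair $(s_i,p_j)\notin M$ ($p_j$ offered by $l_k$) blocks $M$ if ($s_i$ is unassigned or prefers $p_j$ to $M(s_i)$) and one of: (P1) $p_j$ and $l_k$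 undersubscribed; (P2) $p_j$ undersubscribed, $l_k$ full, $s_i\in M(l_k)$; (P3) $p_j$ undersubscribed, $l_k$ full, $l_k$ prefers $s_i$ to the worst student of $M(l_k)$; (P4) $p_j$ full and $l_k$ prefers $s_i$ to the worst student of $M(p_j)$. $M$ is stable if it has no blocking pair. Given stable matchings $M,M'$, $M^\lor$ is the assignment in which each student unassigned in both $M$ and $M'$ is unassigned, each student assigned to the same project in both is assigned to that project, and every other student is assigned to the worse (in her preference) of her projects in $M$ and $M'$. *)

theory Defs
  imports Main
begin

record ('s, 'p, 'l) spa =
  students  :: "'s set"
  projects  :: "'p set"
  lecturers :: "'l set"
  accept    :: "'s \<Rightarrow> 'p set"
  spref     :: "'s \<Rightarrow> 'p \<Rightarrow> 'p \<Rightarrow> bool"     \<comment> \<open>spref I s p q: s prefers p to q\<close>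
  offer     :: "'p \<Rightarrow> 'l"
  lpref     :: "'l \<Rightarrow> 's \<Rightarrow> 's \<Rightarrow> bool"     \<comment> \<open>lpref I l s t: l prefers s to t\<close>
  pcap      :: "'p \<Rightarrow> nat"
  lcap      :: "'l \<Rightarrow> nat"

definition strict_total_on :: "'a set \<Rightarrow> ('a \<Rightarrow> 'a \<Rightarrow> bool) \<Rightarrow> bool" where
  "strict_total_on X r \<longleftrightarrow>
     (\<forall>x y. r x y \<longrightarrow> x \<in> X \<and> y \<in> X) \<and>
     (\<forall>x. \<not> r x x) \<and>
     (\<forall>x y z. r x y \<longrightarrow> r y z \<longrightarrow> r x z) \<and>
     (\<forall>x\<in>X. \<forall>y\<in>X. x \<noteq> y \<longrightarrow> r x y \<or> r y x)"

definition lec_projects :: "('s, 'p, 'l, 'z) spa_scheme \<Rightarrow> 'l \<Rightarrow> 'p set" where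
  "lec_projects I l = {p \<in> projects I. offer I p = l}"

definition lec_students :: "('s, 'p, 'l, 'z) spa_scheme \<Rightarrow> 'l \<Rightarrow> 's set" where
  "lec_students I l = {s \<in> students I. \<exists>p \<in> accept I s. p \<in> lec_projects I l}"

definition spa_instance :: "('s, 'p, 'l, 'z) spa_scheme \<Rightarrow> bool" where
  "spa_instance I \<longleftrightarrow>
     finite (students I) \<and> finite (projects I) \<and> finite (lecturers I) \<and>
     (\<forall>s \<in> students I. accept I s \<subseteq> projects I \<and> strict_total_on (accept I s) (spref I s)) \<and>
     (\<forall>p \<in> projects I. offer I p \<in> lecturers I \<and> pcap I p > 0) \<and>
     (\<forall>l \<in> lecturers I. lec_projects I l \<noteq> {} \<and>
        strict_total_on (lec_students I l) (lpref I l) \<and>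
        (\<forall>p \<in> lec_projects I l. pcap I p \<le> lcap I l) \<and>
        lcap I l \<le> (\<Sum>p \<in> lec_projects I l. pcap I p))"

definition acceptable :: "('s, 'p, 'l, 'z) spa_scheme \<Rightarrow> 's \<Rightarrow> 'p \<Rightarrow> bool" where
  "acceptable I s p \<longleftrightarrow> s \<in> students I \<and> p \<in> accept I s \<and> s \<in> lec_students I (offer I p)"

definition assigned_p :: "('s \<times> 'p) set \<Rightarrow> 'p \<Rightarrow> 's set" where
  "assigned_p M p = {s. (s, p) \<in> M}"

definition assigned_l :: "('s, 'p, 'l, 'z) spa_scheme \<Rightarrow> ('s \<times> 'p) set \<Rightarrow> 'l \<Rightarrow> 's set" where
  "assigned_l I M l = {s. \<exists>p. (s, p) \<in> M \<and> offer I p = l}"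

definition is_matching :: "('s, 'p, 'l, 'z) spa_scheme \<Rightarrow> ('s \<times> 'p) set \<Rightarrow> bool" where
  "is_matching I M \<longleftrightarrow>
     (\<forall>(s, p) \<in> M. acceptable I s p) \<and>
     (\<forall>s p q. (s, p) \<in> M \<longrightarrow> (s, q) \<in> M \<longrightarrow> p = q) \<and>
     (\<forall>p \<in> projects I. card (assigned_p M p) \<le> pcap I p) \<and>
     (\<forall>l \<in> lecturers I. card (assigned_l I M l) \<le> lcap I l)"

definition p_under :: "('s, 'p, 'l, 'z) spa_scheme \<Rightarrow> ('s \<times> 'p) set \<Rightarrow> 'p \<Rightarrow> bool" where
  "p_under I M p \<longleftrightarrow> card (assigned_p M p) < pcap I p"

definition p_full :: "('s, 'p, 'l, 'z) spa_scheme \<Rightarrow> ('s \<times> 'p) set \<Rightarrow> 'p \<Rightarrow> bool" where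
  "p_full I M p \<longleftrightarrow> card (assigned_p M p) = pcap I p"

definition l_under :: "('s, 'p, 'l, 'z) spa_scheme \<Rightarrow> ('s \<times> 'p) set \<Rightarrow> 'l \<Rightarrow> bool" where
  "l_under I M l \<longleftrightarrow> card (assigned_l I M l) < lcap I l"

definition l_full :: "('s, 'p, 'l, 'z) spa_scheme \<Rightarrow> ('s \<times> 'p) set \<Rightarrow> 'l \<Rightarrow> bool" where
  "l_full I M l \<longleftrightarrow> card (assigned_l I M l) = lcap I l"

definition prefers_to_worst :: "('s, 'p, 'l, 'z) spa_scheme \<Rightarrow> 'l \<Rightarrow> 's \<Rightarrow> 's set \<Rightarrow> bool" where
  "prefers_to_worst I l s X \<longleftrightarrow>
     (\<exists>w \<in> X. (\<forall>u \<in> X. u \<noteq> w \<longrightarrow> lpref I l u w) \<and> lpref I l s w)"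

definition blocking_pair :: "('s, 'p, 'l, 'z) spa_scheme \<Rightarrow> ('s \<times> 'p) set \<Rightarrow> 's \<Rightarrow> 'p \<Rightarrow> bool" where
  "blocking_pair I M s p \<longleftrightarrow>
     acceptable I s p \<and> (s, p) \<notin> M \<and>
     ((\<forall>q. (s, q) \<notin> M) \<or> (\<exists>q. (s, q) \<in> M \<and> spref I s p q)) \<and>
     (let l = offer I p in
       (p_under I M p \<and> l_under I M l) \<or>
       (p_under I M p \<and> l_full I M l \<and> s \<in> assigned_l I M l) \<or>
       (p_under I M p \<and> l_full I M l \<and> prefers_to_worst I l s (assigned_l I M l)) \<or>
       (p_full I M p \<and> prefers_to_worst I l s (assigned_p M p)))"

definition stable :: "('s, 'p, 'l, 'z) spa_scheme \<Rightarrow> ('s \<times> 'p) set \<Rightarrow> bool" where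
  "stable I M \<longleftrightarrow> is_matching I M \<and> (\<forall>s p. \<not> blocking_pair I M s p)"

text \<open>The assignment M-vee: a student assigned the same project in both keeps it; a student
  assigned different projects gets the worse one; a student unassigned in at least one of
  M, M' (being unassigned is regarded as worse than any project) is unassigned.\<close>
definition join_worse :: "('s, 'p, 'l, 'z) spa_scheme \<Rightarrow> ('s \<times> 'p) set \<Rightarrow> ('s \<times> 'p) set \<Rightarrow> ('s \<times> 'p) set" where
  "join_worse I M M' =
     {(s, p). ((s, p) \<in> M \<and> (s, p) \<in> M') \<or>
              ((s, p) \<in> M \<and> (\<exists>q. (s, q) \<in> M' \<and> spref I s q p)) \<or>
              ((s, p) \<in> M' \<and> (\<exists>q. (s, q) \<in> M \<and> spref I s q p))}"

end

theory Submission
  imports Defs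
begin

text \<open>Suppose \<open>p\<close> were full in both \<open>M\<close> and \<open>M'\<close> but undersubscribed in \<open>M\<^sup>\<or>\<close>. Since
  \<open>M\<^sup>\<or>(p) \<subseteq> M(p) \<union> M'(p)\<close>, some \<open>s \<in> M(p)\<close> and some \<open>t \<in> M'(p)\<close> lose \<open>p\<close> in \<open>M\<^sup>\<or>\<close>. Then
  \<open>s\<close> prefers \<open>p\<close> to her assignment in \<open>M'\<close>, where \<open>p\<close> is full, so stability of \<open>M'\<close> (case P4)
  forces the lecturer of \<open>p\<close> to prefer every student of \<open>M'(p)\<close>, in particular \<open>t\<close>, to \<open>s\<close>.
  Symmetrically the lecturer prefers \<open>s\<close> to \<open>t\<close>, a contradiction. Hence \<open>M(p)\<close> or \<open>M'(p)\<close> is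
  contained in \<open>M\<^sup>\<or>(p)\<close>, which therefore has at least \<open>c\<^sub>j\<close> students.\<close>

definition student_improves :: "('s, 'p, 'l, 'z) spa_scheme \<Rightarrow> ('s \<times> 'p) set \<Rightarrow> 's \<Rightarrow> 'p \<Rightarrow> bool" where
  "student_improves I M s p \<longleftrightarrow> (\<forall>q. (s, q) \<notin> M) \<or> (\<exists>q. (s, q) \<in> M \<and> spref I s p q)"

lemma strict_total_on_asym:
  assumes "strict_total_on X r" "r x y"
  shows "\<not> r y x"
  using assms unfolding strict_total_on_def by blast

lemma strict_total_on_total:
  assumes "strict_total_on X r" "x \<in> X" "y \<in> X" "x \<noteq> y"
  shows "r x y \<or> r y x"
  using assms unfolding strict_total_on_def by blast

lemma strict_total_on_trans:
  assumes "strict_total_on X r" "r x y" "r y z"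
  shows "r x z"
  using assms unfolding strict_total_on_def by blast

lemma strict_total_on_ex_bottom:
  assumes "strict_total_on X r" "finite Y" "Y \<noteq> {}" "Y \<subseteq> X"
  shows "\<exists>w\<in>Y. \<forall>u\<in>Y. u \<noteq> w \<longrightarrow> r u w"
  using assms(2,3,4)
proof (induction Y rule: finite_ne_induct)
  case (singleton x)
  then show ?case by auto
next
  case (insert x F)
  then obtain w where w: "w \<in> F" "\<forall>u\<in>F. u \<noteq> w \<longrightarrow> r u w" by auto
  have "x \<noteq> w" "x \<in> X" "w \<in> X" using insert w by auto
  then have "r x w \<or> r w x" using strict_total_on_total[OF assms(1)] by blast
  then show ?case
  proof
    assume "r x w"
    then show ?thesis using w by auto
  next
    assume "r w x"
    then show ?thesis using w strict_total_on_trans[OF assms(1)] by (metis insert_iff)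
  qed
qed

lemma lpref_of_not_prefers_to_worst:
  assumes total: "strict_total_on (lec_students I l) (lpref I l)"
    and "finite X" "X \<noteq> {}" and X: "X \<subseteq> lec_students I l"
    and s: "s \<in> lec_students I l" "s \<notin> X"
    and "\<not> prefers_to_worst I l s X" and u: "u \<in> X"
  shows "lpref I l u s"
proof -
  obtain w where w: "w \<in> X" "\<forall>u\<in>X. u \<noteq> w \<longrightarrow> lpref I l u w"
    using strict_total_on_ex_bottom[OF total \<open>finite X\<close> \<open>X \<noteq> {}\<close> X] by blast
  then have "\<not> lpref I l s w"
    using \<open>\<not> prefers_to_worst I l s X\<close> unfolding prefers_to_worst_def by blast
  moreover have "s \<noteq> w" "w \<in> lec_students I l" using s w X by auto
  ultimately have "lpref I l w s" using strict_total_on_total[OF total s(1)] by blast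
  then show ?thesis using w u strict_total_on_trans[OF total] by metis
qed

lemma spa_instance_spref_strict_total:
  assumes "spa_instance I" "s \<in> students I"
  shows "strict_total_on (accept I s) (spref I s)"
  using assms unfolding spa_instance_def by blast

lemma spa_instance_lpref_strict_total:
  assumes "spa_instance I" "p \<in> projects I"
  shows "strict_total_on (lec_students I (offer I p)) (lpref I (offer I p))"
  using assms unfolding spa_instance_def by auto

lemma matching_acceptable:
  assumes "is_matching I M" "(s, p) \<in> M"
  shows "acceptable I s p"
  using assms unfolding is_matching_def by auto

lemma finite_assigned_p:
  assumes "spa_instance I" "is_matching I M"
  shows "finite (assigned_p M p)"
proof (rule finite_subset)
  show "assigned_p M p \<subseteq> students I"
    using matching_acceptable[OF assms(2)] unfolding assigned_p_def acceptable_def by auto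
  show "finite (students I)" using assms(1) unfolding spa_instance_def by auto
qed

lemma matching_not_p_under_imp_p_full:
  assumes "is_matching I M" "p \<in> projects I" "\<not> p_under I M p"
  shows "p_full I M p"
proof -
  have "card (assigned_p M p) \<le> pcap I p" using assms(1,2) unfolding is_matching_def by blast
  then show ?thesis using assms(3) unfolding p_under_def p_full_def by simp
qed

lemma stable_p_full_lpref:
  assumes inst: "spa_instance I" and st: "stable I M" and p: "p \<in> projects I"
    and full: "p_full I M p"
    and acc: "acceptable I s p" and "(s, p) \<notin> M" and "student_improves I M s p"
    and u: "(u, p) \<in> M"
  shows "lpref I (offer I p) u s"
proof (rule lpref_of_not_prefers_to_worst)
  have "\<not> blocking_pair I M s p" using st unfolding stable_def by auto
  then show "\<not> prefers_to_worst I (offer I p) s (assigned_p M p)"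
    using acc \<open>(s, p) \<notin> M\<close> \<open>student_improves I M s p\<close> full
    unfolding blocking_pair_def student_improves_def Let_def by auto
  have "is_matching I M" using st unfolding stable_def by auto
  then show "finite (assigned_p M p)" "assigned_p M p \<subseteq> lec_students I (offer I p)"
    using finite_assigned_p[OF inst] unfolding assigned_p_def
    by (auto dest: matching_acceptable simp: acceptable_def)
  show "assigned_p M p \<noteq> {}" using u unfolding assigned_p_def by auto
  show "strict_total_on (lec_students I (offer I p)) (lpref I (offer I p))"
    using spa_instance_lpref_strict_total[OF inst p] .
  show "s \<in> lec_students I (offer I p)" using acc unfolding acceptable_def by auto
  show "s \<notin> assigned_p M p" "u \<in> assigned_p M p"
    using \<open>(s, p) \<notin> M\<close> u unfolding assigned_p_def by auto
qed

lemma join_worse_commute: "join_worse I M M' = join_worse I M' M"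
  unfolding join_worse_def by auto

lemma assigned_p_join_worse_subset:
  "assigned_p (join_worse I M M') p \<subseteq> assigned_p M p \<union> assigned_p M' p"
  unfolding join_worse_def assigned_p_def by auto

lemma notin_join_worse_student_improves:
  assumes inst: "spa_instance I" and "is_matching I M" "is_matching I M'"
    and s: "(s, p) \<in> M" "(s, p) \<notin> join_worse I M M'"
  shows "(s, p) \<notin> M' \<and> student_improves I M' s p"
proof -
  have "(s, p) \<notin> M'" using s unfolding join_worse_def by auto
  moreover have "spref I s p q" if q: "(s, q) \<in> M'" for q
  proof -
    have "acceptable I s p" "acceptable I s q"
      using matching_acceptable[OF assms(2) s(1)] matching_acceptable[OF assms(3) q] .
    then have "s \<in> students I" "p \<in> accept I s" "q \<in> accept I s"
      unfolding acceptable_def by blast+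
    moreover have "q \<noteq> p" using q \<open>(s, p) \<notin> M'\<close> by auto
    ultimately have "spref I s p q \<or> spref I s q p"
      using strict_total_on_total spa_instance_spref_strict_total[OF inst] by metis
    moreover have "\<not> spref I s q p" using s q unfolding join_worse_def by auto
    ultimately show ?thesis by blast
  qed
  ultimately show ?thesis unfolding student_improves_def by blast
qed

lemma p_full_both_imp_assigned_p_subset_join_worse:
  assumes inst: "spa_instance I" and st: "stable I M" and st': "stable I M'"
    and p: "p \<in> projects I" and full: "p_full I M p" and full': "p_full I M' p"
  shows "assigned_p M p \<subseteq> assigned_p (join_worse I M M') p
    \<or> assigned_p M' p \<subseteq> assigned_p (join_worse I M M') p"
proof (rule ccontr)
  assume "\<not> ?thesis"
  then obtain s t where s: "(s, p) \<in> M" "(s, p) \<notin> join_worse I M M'"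
    and t: "(t, p) \<in> M'" "(t, p) \<notin> join_worse I M' M"
    unfolding assigned_p_def join_worse_commute[of I M'] by auto
  have match: "is_matching I M" "is_matching I M'" using st st' unfolding stable_def by auto
  have "lpref I (offer I p) t s"
    using stable_p_full_lpref[OF inst st' p full' matching_acceptable[OF match(1) s(1)]]
      notin_join_worse_student_improves[OF inst match s] t(1) by blast
  moreover have "lpref I (offer I p) s t"
    using stable_p_full_lpref[OF inst st p full matching_acceptable[OF match(2) t(1)]]
      notin_join_worse_student_improves[OF inst match(2,1) t] s(1) by blast
  ultimately show False
    using strict_total_on_asym[OF spa_instance_lpref_strict_total[OF inst p]] by blast
qed

theorem lemma10:
  fixes I :: "('s, 'p, 'l) spa" and M M' :: "('s \<times> 'p) set" and p :: 'p
  assumes "spa_instance I"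
    and "stable I M" and "stable I M'"
    and "p \<in> projects I"
    and "p_under I (join_worse I M M') p"
  shows "p_under I M p \<or> p_under I M' p"
proof (rule ccontr)
  assume not_under: "\<not> (p_under I M p \<or> p_under I M' p)"
  have match: "is_matching I M" "is_matching I M'" using assms(2,3) unfolding stable_def by auto
  then have full: "p_full I M p" "p_full I M' p"
    using matching_not_p_under_imp_p_full[OF _ assms(4)] not_under by auto
  let ?J = "assigned_p (join_worse I M M') p"
  have "finite ?J"
    by (rule finite_subset[OF assigned_p_join_worse_subset])
      (simp add: finite_assigned_p[OF assms(1)] match)
  then have "card (assigned_p M p) \<le> card ?J \<or> card (assigned_p M' p) \<le> card ?J"
    using p_full_both_imp_assigned_p_subset_join_worse[OF assms(1-4) full]
    by (auto intro: card_mono)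
  then show False using assms(5) full unfolding p_under_def p_full_def by auto
qed

end
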